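(* The maps $\mathbf{W}_+:R_+\to\mathbb{R}^2$ and $\mathbf{W}_-:R_-\to\mathbb{R}^2$ given by $$\mathbf{W}_\pm(x,y)=\left(\frac{1+\omega_\pm}{1-\omega_\pm}\,x,\ \frac{|\omega_\pm|}{1+\omega_\pm}\,y\right),\qquad \omega_\pm=\omega_\pm(x,y),$$ are orientation preserving homeomorphisms onto their respective images (which are contained in $R$).
   Context: For $x>0$, $y\in\mathbb{R}$ let $r_1^2=4+x^2+4x^2y^2$, $\Delta=((x+2)^2+8x^2y^2)((x-2)^2+8x^2y^2)$ and $\omega_\pm(x,y)=\frac{x^2-4\pm\sqrt{\Delta}}{2r_1^2}$. Let $R=\{(x,y): x>0,\ 4-4y^2-x^2y^2-8x^2y^4\ge 0\}$, $R_+=R\cap((0,2]\times\mathbb{R})$, $R_-=R\cap([2,\infty)\times\mathbb{R})$. On $R_+$ one has $0\le\omega_+<1$ and on $R_-$ one has $-1<\omega_-\le 0$. *)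

theory Defs
  imports "HOL-Analysis.Analysis"
begin

definition r1sq :: "real \<Rightarrow> real \<Rightarrow> real" where
  "r1sq x y = 4 + x^2 + 4 * x^2 * y^2"

definition Delta :: "real \<Rightarrow> real \<Rightarrow> real" where
  "Delta x y = ((x + 2)^2 + 8 * x^2 * y^2) * ((x - 2)^2 + 8 * x^2 * y^2)"

definition omega_plus :: "real \<Rightarrow> real \<Rightarrow> real" where
  "omega_plus x y = (x^2 - 4 + sqrt (Delta x y)) / (2 * r1sq x y)"

definition omega_minus :: "real \<Rightarrow> real \<Rightarrow> real" where
  "omega_minus x y = (x^2 - 4 - sqrt (Delta x y)) / (2 * r1sq x y)"

definition Rset :: "(real \<times> real) set" where
  "Rset = {(x, y). x > 0 \<and> 4 - 4 * y^2 - x^2 * y^2 - 8 * x^2 * y^4 \<ge> 0}"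

definition Rplus :: "(real \<times> real) set" where
  "Rplus = Rset \<inter> ({0<..2} \<times> UNIV)"

definition Rminus :: "(real \<times> real) set" where
  "Rminus = Rset \<inter> ({2..} \<times> UNIV)"

definition Wmap :: "(real \<Rightarrow> real \<Rightarrow> real) \<Rightarrow> real \<times> real \<Rightarrow> real \<times> real" where
  "Wmap om p = (let x = fst p; y = snd p; w = om x y in
      ((1 + w) / (1 - w) * x, \<bar>w\<bar> / (1 + w) * y))"

definition W_plus :: "real \<times> real \<Rightarrow> real \<times> real" where
  "W_plus = Wmap omega_plus"

definition W_minus :: "real \<times> real \<Rightarrow> real \<times> real" where
  "W_minus = Wmap omega_minus"

definition jac_det :: "(real \<times> real \<Rightarrow> real \<times> real) \<Rightarrow> real" where
  "jac_det D = fst (D (1, 0)) * snd (D (0, 1)) - fst (D (0, 1)) * snd (D (1, 0))"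

definition orientation_preserving_on ::
    "(real \<times> real) set \<Rightarrow> (real \<times> real \<Rightarrow> real \<times> real) \<Rightarrow> bool" where
  "orientation_preserving_on S f \<longleftrightarrow>
     (\<forall>p \<in> interior S. \<exists>D. (f has_derivative D) (at p) \<and> jac_det D \<ge> 0) \<and>
     (\<exists>p \<in> interior S. \<exists>D. (f has_derivative D) (at p) \<and> jac_det D > 0)"

end

theory Submission
  imports Defs
begin

(*
  Put tau = (1 - omega_+) / (1 + omega_+). It lies in (0, 1], it is a root of
  x^2 tau^2 - (4 + x^2 + 8 x^2 y^2) tau + 4 (whose discriminant is Delta), and
  W_+(x, y) = (x / tau, (1 - tau) y / 2). For (u, v) = W_+(x, y) the quadratic turns into
  32 u^2 v^2 = (1 - tau)^3 (4 / tau^3 - u^2), whose right-hand side is strictly decreasing in tau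
  on R_+; so W_+(x, y) determines tau and then (x, y). On R_+ also tau >= 1/4, so x <= u <= 4 x:
  preimages of half-planes u > c lie in compact strips, which makes the inverse continuous.
  Implicit differentiation of the quadratic gives a Jacobian with the sign of
  (1 - tau) (4 - x^2 tau^2) >= 0.

  The involution (x, y) |-> (4 / x, x y / 2) of the half-plane x > 0 preserves R, exchanges R_+
  and R_-, and satisfies omega_-(x, y) = - omega_+(4 / x, x y / 2), so it conjugates W_+ into W_-.
  Its Jacobian is negative, hence the conjugate is again orientation preserving.
*)

section \<open>Homeomorphisms and Jacobians of plane maps\<close>

lemma homeomorphism_locally_proper:
  fixes f :: "'a::topological_space \<Rightarrow> 'b::t2_space"
  assumes cont: "continuous_on S f" and inj: "inj_on f S"
    and proper: "\<And>y. y \<in> f ` S \<Longrightarrow> \<exists>U K. open U \<and> y \<in> U \<and> compact K \<and> K \<subseteq> S \<and> S \<inter> f -` U \<subseteq> K"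
  shows "\<exists>g. homeomorphism S (f ` S) f g"
proof -
  define g where "g = inv_into S f"
  have gf: "\<And>x. x \<in> S \<Longrightarrow> g (f x) = x"
    using inj by (simp add: g_def)
  have "continuous (at y within f ` S) g" if y: "y \<in> f ` S" for y
  proof -
    obtain U K where U: "open U" "y \<in> U" and K: "compact K" "K \<subseteq> S" "S \<inter> f -` U \<subseteq> K"
      using proper[OF y] by blast
    have "continuous_on (f ` K) g"
      using continuous_on_inv[OF continuous_on_subset[OF cont] K(1)] gf K(2) by blast
    moreover have "f ` S \<inter> U \<subseteq> f ` K"
      using K(3) by blast
    ultimately have "continuous (at y within f ` S \<inter> U) g"
      using y U(2) by (meson IntI continuous_on_eq_continuous_within continuous_on_subset)
    moreover have "at y within f ` S \<inter> U = at y within f ` S"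
      by (rule at_within_nhd[OF U(2,1)]) auto
    ultimately show ?thesis
      by simp
  qed
  then have "homeomorphism S (f ` S) f g"
    using cont gf by (auto simp: homeomorphism_def continuous_on_eq_continuous_within g_def)
      (auto simp: image_iff f_inv_into_f inv_into_into)
  then show ?thesis
    by blast
qed

lemma homeomorphism_involution:
  assumes "continuous_on S f" "\<And>x. x \<in> S \<Longrightarrow> f x \<in> S" "\<And>x. x \<in> S \<Longrightarrow> f (f x) = x" "A \<subseteq> S"
  shows "homeomorphism A (f ` A) f f"
proof (rule homeomorphismI)
  show "continuous_on A f" "continuous_on (f ` A) f"
    using assms by (auto intro: continuous_on_subset)
  show "f ` A \<subseteq> f ` A" "f ` f ` A \<subseteq> A"
    using assms by (auto simp: image_iff)
qed (use assms in auto)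

lemma jac_det_compose:
  assumes "linear f" "linear g"
  shows "jac_det (f \<circ> g) = jac_det f * jac_det g"
proof -
  define u v where "u = f (1, 0)" and "v = f (0, 1)"
  have f: "f (a, c) = (a * fst u + c * fst v, a * snd u + c * snd v)" for a c
  proof -
    have "(a, c) = a *\<^sub>R (1, 0) + c *\<^sub>R (0, 1)"
      by simp
    then have "f (a, c) = a *\<^sub>R u + c *\<^sub>R v"
      using linear_add[OF assms(1)] linear_scale[OF assms(1)] by (metis u_def v_def)
    then show ?thesis
      by (simp add: prod_eq_iff)
  qed
  obtain a b c d where "g (1, 0) = (a, c)" "g (0, 1) = (b, d)"
    by fastforce
  then show ?thesis
    unfolding jac_det_def comp_def by (simp add: f algebra_simps)
qed

section \<open>The root omega_plus\<close>

lemma r1sq_pos: "0 < r1sq x y"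
  unfolding r1sq_def by (intro add_pos_nonneg) auto

lemma Delta_eq: "Delta x y = (x^2 - 4)^2 + 16 * x^2 * y^2 * r1sq x y"
  unfolding Delta_def r1sq_def by algebra

lemma quadratic_completed_square:
  "4 * r1sq x y * (r1sq x y * c^2 - (x^2 - 4) * c - 4 * x^2 * y^2)
     = (2 * r1sq x y * c - (x^2 - 4))^2 - Delta x y"
  unfolding Delta_eq by algebra

lemma Delta_nonneg: "0 \<le> Delta x y"
  unfolding Delta_def by (intro mult_nonneg_nonneg add_nonneg_nonneg) auto

lemma sqrt_Delta_ge: "\<bar>x^2 - 4\<bar> \<le> sqrt (Delta x y)"
proof -
  have "(x^2 - 4)^2 \<le> Delta x y"
    unfolding Delta_eq using r1sq_pos[of x y] by simp
  then have "sqrt ((x^2 - 4)^2) \<le> sqrt (Delta x y)"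
    by (rule real_sqrt_le_mono)
  then show ?thesis
    by simp
qed

lemma omega_plus_discriminant: "2 * r1sq x y * omega_plus x y - (x^2 - 4) = sqrt (Delta x y)"
  using r1sq_pos[of x y] by (simp add: omega_plus_def)

lemma omega_plus_root: "r1sq x y * (omega_plus x y)^2 - (x^2 - 4) * omega_plus x y - 4 * x^2 * y^2 = 0"
  using quadratic_completed_square[of x y "omega_plus x y"] r1sq_pos[of x y] Delta_nonneg[of x y]
  by (simp add: omega_plus_discriminant)

lemma omega_plus_le_iff:
  assumes "x^2 - 4 \<le> 2 * r1sq x y * c"
  shows "omega_plus x y \<le> c \<longleftrightarrow> 0 \<le> r1sq x y * c^2 - (x^2 - 4) * c - 4 * x^2 * y^2"
proof -
  have "omega_plus x y \<le> c \<longleftrightarrow> sqrt (Delta x y) \<le> 2 * r1sq x y * c - (x^2 - 4)"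
    using omega_plus_discriminant[of x y] r1sq_pos[of x y] by (smt (verit) mult_le_cancel_left_pos)
  also have "\<dots> \<longleftrightarrow> Delta x y \<le> (2 * r1sq x y * c - (x^2 - 4))^2"
    using assms real_le_lsqrt sqrt_le_D by (metis diff_ge_0_iff_ge)
  also have "\<dots> \<longleftrightarrow> 0 \<le> r1sq x y * c^2 - (x^2 - 4) * c - 4 * x^2 * y^2"
    using quadratic_completed_square[of x y c] r1sq_pos[of x y] by (smt (verit) zero_le_mult_iff)
  finally show ?thesis .
qed

lemma omega_plus_nonneg: "0 \<le> omega_plus x y"
  using sqrt_Delta_ge[of x y] r1sq_pos[of x y] unfolding omega_plus_def
  by (intro divide_nonneg_pos) auto

lemma omega_plus_less_1: "omega_plus x y < 1"
proof -
  have q1: "r1sq x y * 1^2 - (x^2 - 4) * 1 - 4 * x^2 * y^2 = 8"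
    by (simp add: r1sq_def)
  have "x^2 - 4 \<le> 2 * r1sq x y * 1"
    by (simp add: r1sq_def)
  then have "omega_plus x y \<le> 1"
    using omega_plus_le_iff q1 by simp
  moreover have "omega_plus x y \<noteq> 1"
    using omega_plus_root[of x y] q1 by auto
  ultimately show ?thesis by simp
qed

lemma omega_minus_eq:
  assumes "0 < x"
  shows "omega_minus x y = - omega_plus (4 / x) (x * y / 2)"
proof -
  have r: "r1sq (4 / x) (x * y / 2) = 4 * r1sq x y / x^2"
    using assms by (simp add: r1sq_def field_simps power2_eq_square)
  have "Delta (4 / x) (x * y / 2) = (4 / x^2)^2 * Delta x y"
    using assms by (simp add: Delta_def field_simps power2_eq_square)
  then have s: "sqrt (Delta (4 / x) (x * y / 2)) = 4 / x^2 * sqrt (Delta x y)"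
    by (simp add: real_sqrt_mult)
  have "x \<noteq> 0" "r1sq x y \<noteq> 0"
    using assms r1sq_pos[of x y] by auto
  then show ?thesis
    unfolding omega_minus_def omega_plus_def r s
    by (simp add: divide_simps)
qed

section \<open>The parameter tau\<close>

definition tau :: "real \<Rightarrow> real \<Rightarrow> real" where
  "tau x y = (1 - omega_plus x y) / (1 + omega_plus x y)"

lemma tau_pos: "0 < tau x y"
  using omega_plus_nonneg[of x y] omega_plus_less_1[of x y] by (simp add: tau_def)

lemma tau_le_1: "tau x y \<le> 1"
  using omega_plus_nonneg[of x y] by (simp add: tau_def)

lemma tau_root: "x^2 * (tau x y)^2 - (4 + x^2 + 8 * x^2 * y^2) * tau x y + 4 = 0"
proof -
  define w where "w = omega_plus x y"
  define t where "t = tau x y"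
  have "1 + w \<noteq> 0"
    using omega_plus_nonneg[of x y] by (simp add: w_def)
  then have t: "t * (1 + w) = 1 - w"
    by (simp add: t_def tau_def w_def)
  have "(x^2 * t^2 - (4 + x^2 + 8 * x^2 * y^2) * t + 4) * (1 + w)^2
      = x^2 * (t * (1 + w))^2 - (4 + x^2 + 8 * x^2 * y^2) * (t * (1 + w)) * (1 + w) + 4 * (1 + w)^2"
    by algebra
  also have "\<dots> = 2 * (r1sq x y * w^2 - (x^2 - 4) * w - 4 * x^2 * y^2)"
    unfolding t r1sq_def by algebra
  also have "\<dots> = 0"
    using omega_plus_root[of x y] by (simp add: w_def)
  finally show ?thesis
    using \<open>1 + w \<noteq> 0\<close> by (simp add: t_def)
qed

lemma continuous_on_tau: "continuous_on S (\<lambda>p. tau (fst p) (snd p))"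
proof -
  have "continuous_on S (\<lambda>p. r1sq (fst p) (snd p))"
    unfolding r1sq_def by (intro continuous_intros)
  then have "continuous_on S (\<lambda>p. omega_plus (fst p) (snd p))"
    unfolding omega_plus_def Delta_def using r1sq_pos
    by (intro continuous_intros) (auto simp: less_imp_neq[symmetric])
  moreover have "1 + omega_plus (fst p) (snd p) \<noteq> 0" for p
    using omega_plus_nonneg[of "fst p" "snd p"] by linarith
  ultimately show ?thesis
    unfolding tau_def by (intro continuous_intros) auto
qed

lemma tau_has_derivative:
  assumes "0 < Delta x y"
  obtains Dt where "((\<lambda>p. tau (fst p) (snd p)) has_derivative Dt) (at (x, y))"
proof -
  have pos: "0 < 1 + omega_plus x y" "0 < r1sq x y"
    using omega_plus_nonneg[of x y] r1sq_pos[of x y] by auto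
  have "\<exists>Dt. ((\<lambda>p. tau (fst p) (snd p)) has_derivative Dt) (at (x, y))"
    unfolding tau_def omega_plus_def
    by (rule exI, (rule derivative_intros
          | use assms pos in \<open>simp add: Delta_def r1sq_def omega_plus_def\<close>)+)
  then show ?thesis
    using that by blast
qed

lemma tau_implicit_derivative:
  assumes "((\<lambda>p. tau (fst p) (snd p)) has_derivative Dt) (at (x, y))"
  shows "(4 + x^2 + 8 * x^2 * y^2 - 2 * x^2 * tau x y) * Dt h
       = (2 * x * (tau x y)^2 - 2 * x * tau x y - 16 * x * y^2 * tau x y) * fst h
         - 16 * x^2 * y * tau x y * snd h"
proof -
  define G where "G q = (fst q)^2 * (tau (fst q) (snd q))^2
      - (4 + (fst q)^2 + 8 * (fst q)^2 * (snd q)^2) * tau (fst q) (snd q) + 4" for q :: "real \<times> real"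
  have "(G has_derivative (\<lambda>h. (2 * x * (tau x y)^2 - 2 * x * tau x y - 16 * x * y^2 * tau x y) * fst h
         - 16 * x^2 * y * tau x y * snd h
         - (4 + x^2 + 8 * x^2 * y^2 - 2 * x^2 * tau x y) * Dt h)) (at (x, y))"
    unfolding G_def
    by (rule derivative_eq_intros assms refl | simp)+ (simp add: algebra_simps power2_eq_square)
  moreover have "G = (\<lambda>q. 0)"
    using tau_root by (auto simp: G_def)
  then have "(G has_derivative (\<lambda>h. 0)) (at (x, y))"
    by simp
  ultimately have "(\<lambda>h. (2 * x * (tau x y)^2 - 2 * x * tau x y - 16 * x * y^2 * tau x y) * fst h
         - 16 * x^2 * y * tau x y * snd h
         - (4 + x^2 + 8 * x^2 * y^2 - 2 * x^2 * tau x y) * Dt h) = (\<lambda>h. 0)"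
    by (rule has_derivative_unique)
  then show ?thesis
    by (metis (no_types, lifting) eq_iff_diff_eq_0)
qed

section \<open>The map W_plus on R_plus\<close>

lemma Rplus_bounds:
  assumes "(x, y) \<in> Rplus"
  shows "0 < x" "x^2 \<le> 4" "x^2 * y^2 \<le> 1"
proof -
  show "0 < x" "x^2 \<le> 4"
    using assms power_mono[of x 2 2] by (auto simp: Rplus_def Rset_def)
  have constraint: "0 \<le> 4 - 4 * y^2 - x^2 * y^2 - 8 * x^2 * y^4"
    using assms by (simp add: Rplus_def Rset_def)
  show "x^2 * y^2 \<le> 1"
  proof (rule ccontr)
    assume "\<not> x^2 * y^2 \<le> 1"
    moreover have "x^2 * y^2 \<le> 4 * y^2"
      using \<open>x^2 \<le> 4\<close> by (intro mult_right_mono) auto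
    ultimately have "1 < x^2 * y^2" "1 / 4 < y^2"
      by auto
    then have "1 * (1 / 4) < x^2 * y^2 * y^2"
      by (intro mult_strict_mono) auto
    moreover have "x^2 * y^4 = x^2 * y^2 * y^2"
      by (simp add: power4_eq_xxxx power2_eq_square)
    ultimately show False
      using constraint \<open>1 < x^2 * y^2\<close> \<open>1 / 4 < y^2\<close> by linarith
  qed
qed

lemma tau_ge_quarter:
  assumes "(x, y) \<in> Rplus"
  shows "1 / 4 \<le> tau x y"
proof -
  define q where "q = r1sq x y * (3 / 5)^2 - (x^2 - 4) * (3 / 5) - 4 * x^2 * y^2"
  have "25 * q = 96 - 6 * x^2 - 64 * (x^2 * y^2)"
    by (simp add: q_def r1sq_def field_simps power2_eq_square)
  then have "0 \<le> q"
    using Rplus_bounds[OF assms] by linarith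
  moreover have "x^2 - 4 \<le> 2 * r1sq x y * (3 / 5)"
    using Rplus_bounds[OF assms] r1sq_pos[of x y] by simp
  ultimately have "omega_plus x y \<le> 3 / 5"
    using omega_plus_le_iff q_def by blast
  then show ?thesis
    using omega_plus_nonneg[of x y] by (simp add: tau_def field_simps)
qed

lemma W_plus_eq: "W_plus p = (fst p / tau (fst p) (snd p), (1 - tau (fst p) (snd p)) / 2 * snd p)"
proof -
  define w where "w = omega_plus (fst p) (snd p)"
  have w: "0 \<le> w" "w < 1"
    using omega_plus_nonneg omega_plus_less_1 by (simp_all add: w_def)
  have "W_plus p = ((1 + w) / (1 - w) * fst p, \<bar>w\<bar> / (1 + w) * snd p)"
    by (simp add: W_plus_def Wmap_def Let_def w_def)
  also have "(1 + w) / (1 - w) * fst p = fst p / ((1 - w) / (1 + w))"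
    by simp
  also have "\<bar>w\<bar> / (1 + w) * snd p = (1 - (1 - w) / (1 + w)) / 2 * snd p"
    using w by (simp add: field_simps)
  finally show ?thesis
    by (simp add: tau_def w_def)
qed

lemma W_plus_scaling_bounds:
  assumes "(x, y) \<in> Rplus" "W_plus (x, y) = (u, v)"
  shows "v^2 \<le> 9 / 64 * y^2" "(u * v)^2 \<le> 9 / 4 * (x^2 * y^2)"
proof -
  define t where "t = tau x y"
  have t: "1 / 4 \<le> t" "t \<le> 1"
    using tau_ge_quarter[OF assms(1)] tau_le_1[of x y] by (simp_all add: t_def)
  have uv: "u = x / t" "v = (1 - t) / 2 * y"
    using assms(2) by (simp_all add: W_plus_eq t_def)
  have "v^2 = ((1 - t) / 2)^2 * y^2"
    by (simp only: uv power_mult_distrib)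
  also have "\<dots> \<le> (3 / 8)^2 * y^2"
    using t by (intro mult_right_mono power_mono) auto
  finally show "v^2 \<le> 9 / 64 * y^2"
    by (simp add: power2_eq_square)
  have "u * v = (1 - t) / (2 * t) * (x * y)"
    using t by (simp add: uv field_simps)
  then have "(u * v)^2 = ((1 - t) / (2 * t))^2 * (x^2 * y^2)"
    by (simp only: power_mult_distrib)
  also have "\<dots> \<le> (3 / 2)^2 * (x^2 * y^2)"
    using t by (intro mult_right_mono power_mono) (auto simp: field_simps)
  finally show "(u * v)^2 \<le> 9 / 4 * (x^2 * y^2)"
    by (simp add: power2_eq_square)
qed

lemma W_plus_in_Rset:
  assumes "(x, y) \<in> Rplus"
  shows "W_plus (x, y) \<in> Rset"
proof -
  obtain u v where uv: "W_plus (x, y) = (u, v)"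
    by fastforce
  define a z where "a = y^2" and "z = x^2 * y^2"
  have V: "v^2 \<le> 9 / 64 * a" and Z: "(u * v)^2 \<le> 9 / 4 * z"
    using W_plus_scaling_bounds[OF assms uv] by (simp_all add: a_def z_def)
  have "(u * v)^2 * v^2 \<le> (9 / 4 * z) * (9 / 64 * a)"
    using V Z by (intro mult_mono) (auto simp: z_def)
  then have ZV: "(u * v)^2 * v^2 \<le> 81 / 256 * (z * a)"
    by simp
  have "0 \<le> 4 - 4 * a - z - 8 * (z * a)"
    using assms by (simp add: Rplus_def Rset_def a_def z_def power4_eq_xxxx power2_eq_square
        algebra_simps)
  moreover have "0 \<le> a" "0 \<le> z" "0 \<le> z * a" "z \<le> 1"
    using Rplus_bounds[OF assms] by (auto simp: a_def z_def)
  ultimately have "0 \<le> 4 - 4 * v^2 - (u * v)^2 - 8 * ((u * v)^2 * v^2)"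
    using V Z ZV by linarith
  also have "\<dots> = 4 - 4 * v^2 - u^2 * v^2 - 8 * u^2 * v^4"
    by (simp add: power_mult_distrib power4_eq_xxxx power2_eq_square mult.assoc)
  finally have "0 \<le> 4 - 4 * v^2 - u^2 * v^2 - 8 * u^2 * v^4" .
  moreover have "u = x / tau x y"
    using uv by (simp add: W_plus_eq)
  then have "0 < u"
    using Rplus_bounds(1)[OF assms] tau_pos[of x y] by simp
  ultimately show ?thesis
    unfolding uv Rset_def by (simp only: mem_Collect_eq prod.case)
qed

lemma W_plus_image_subset: "W_plus ` Rplus \<subseteq> Rset"
  using W_plus_in_Rset by auto

lemma strict_antimono_W_plus_level:
  "strict_antimono_on {t. 0 < t \<and> t \<le> 1 \<and> u^2 * t^3 \<le> 4} (\<lambda>t::real. (1 - t)^3 * (4 / t^3 - u^2))"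
proof (rule monotone_onI)
  fix s t :: real
  assume s: "s \<in> {t. 0 < t \<and> t \<le> 1 \<and> u^2 * t^3 \<le> 4}" and t: "t \<in> {t. 0 < t \<and> t \<le> 1 \<and> u^2 * t^3 \<le> 4}"
    and "s < t"
  have "0 \<le> 4 / t^3 - u^2"
    using t by (simp add: field_simps)
  moreover have "4 / t^3 < 4 / s^3"
    using s \<open>s < t\<close> by (intro divide_strict_left_mono power_strict_mono) auto
  moreover have "(1 - t)^3 \<le> (1 - s)^3" "0 < (1 - s)^3"
    using t \<open>s < t\<close> by (auto intro: power_mono)
  ultimately have "(1 - t)^3 * (4 / t^3 - u^2) \<le> (1 - s)^3 * (4 / t^3 - u^2)"
    and "(1 - s)^3 * (4 / t^3 - u^2) < (1 - s)^3 * (4 / s^3 - u^2)"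
    by (auto intro: mult_right_mono)
  then show "(1 - t)^3 * (4 / t^3 - u^2) < (1 - s)^3 * (4 / s^3 - u^2)"
    by linarith
qed

lemma W_plus_level:
  assumes "W_plus (x, y) = (u, v)"
  shows "32 * u^2 * v^2 = (1 - tau x y)^3 * (4 / (tau x y)^3 - u^2)"
proof -
  define t where "t = tau x y"
  have t: "t \<noteq> 0"
    using tau_pos[of x y] by (simp add: t_def)
  have uv: "u = x / t" "v = (1 - t) / 2 * y"
    using assms by (simp_all add: W_plus_eq t_def)
  have root: "8 * x^2 * y^2 * t = (1 - t) * (4 - x^2 * t)"
    using tau_root[of x y] by (simp add: t_def algebra_simps power2_eq_square)
  have "32 * u^2 * v^2 = (8 * x^2 * y^2 * t) * (1 - t)^2 / t^3"
    using t unfolding uv by (simp add: field_simps power2_eq_square power3_eq_cube)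
  also have "\<dots> = (1 - t)^3 * (4 - x^2 * t) / t^3"
    unfolding root by (simp add: power2_eq_square power3_eq_cube mult_ac)
  also have "\<dots> = (1 - t)^3 * (4 / t^3 - u^2)"
    using t unfolding uv by (simp add: field_simps power2_eq_square power3_eq_cube)
  finally show ?thesis
    unfolding t_def .
qed

lemma tau_in_level_domain:
  assumes "(x, y) \<in> Rplus" "W_plus (x, y) = (u, v)"
  shows "tau x y \<in> {t. 0 < t \<and> t \<le> 1 \<and> u^2 * t^3 \<le> 4}"
proof -
  define t where "t = tau x y"
  have u: "u = x / t"
    using assms(2) by (simp add: W_plus_eq t_def)
  have "0 < t" "t \<le> 1" "x^2 \<le> 4"
    using tau_pos tau_le_1 Rplus_bounds[OF assms(1)] by (auto simp: t_def)
  moreover have "u^2 * t^3 = x^2 * t"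
    using u \<open>0 < t\<close> by (simp add: field_simps power2_eq_square power3_eq_cube)
  moreover have "x^2 * t \<le> x^2"
    using \<open>t \<le> 1\<close> by (simp add: mult_left_le)
  ultimately show ?thesis
    by (simp add: t_def)
qed

lemma inj_on_W_plus: "inj_on W_plus Rplus"
proof (rule inj_onI)
  fix p q
  assume p: "p \<in> Rplus" and q: "q \<in> Rplus" and eq: "W_plus p = W_plus q"
  obtain x1 y1 x2 y2 where pq: "p = (x1, y1)" "q = (x2, y2)"
    by fastforce
  obtain u v where uv1: "W_plus (x1, y1) = (u, v)"
    by fastforce
  then have uv2: "W_plus (x2, y2) = (u, v)"
    using eq by (simp add: pq)
  have "inj_on (\<lambda>t. (1 - t)^3 * (4 / t^3 - u^2)) {t. 0 < t \<and> t \<le> 1 \<and> u^2 * t^3 \<le> 4}"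
    using strict_antimono_W_plus_level[of u] by (simp add: strict_antimono_iff_antimono)
  then have t: "tau x1 y1 = tau x2 y2"
    using tau_in_level_domain[OF _ uv1] tau_in_level_domain[OF _ uv2] p q
      W_plus_level[OF uv1] W_plus_level[OF uv2]
    by (simp add: pq inj_on_def)
  define t where "t = tau x1 y1"
  have u: "u = x1 / t" "u = x2 / t" and v: "v = (1 - t) / 2 * y1" "v = (1 - t) / 2 * y2"
    using uv1 uv2 t by (simp_all add: W_plus_eq t_def)
  then have x: "x1 = x2"
    using tau_pos[of x1 y1] by (simp add: t_def)
  have "y1 = y2"
  proof (cases "t = 1")
    case True
    have "x1^2 * y1^2 = 0" "x2^2 * y2^2 = 0"
      using tau_root[of x1 y1] tau_root[of x2 y2] True t by (simp_all add: t_def)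
    moreover have "0 < x1" "0 < x2"
      using Rplus_bounds(1) p q by (auto simp: pq)
    ultimately show ?thesis
      by simp
  next
    case False
    then show ?thesis
      using v by simp
  qed
  then show "p = q"
    using x by (simp add: pq)
qed

lemma continuous_on_W_plus: "continuous_on S W_plus"
proof -
  have "tau (fst p) (snd p) \<noteq> 0" for p
    using tau_pos less_irrefl by metis
  then show ?thesis
    unfolding W_plus_eq[abs_def] by (intro continuous_intros continuous_on_tau) auto
qed

lemma compact_Rset_strip:
  assumes "0 < a"
  shows "compact (Rset \<inter> {a..b} \<times> UNIV)"
proof (rule compact_eq_bounded_closed[THEN iffD2], rule conjI)
  have "Rset \<inter> {a..b} \<times> UNIV \<subseteq> {a..b} \<times> {-1..1}"
  proof
    fix p
    assume "p \<in> Rset \<inter> {a..b} \<times> UNIV"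
    then obtain x y where p: "p = (x, y)" "(x, y) \<in> Rset" "x \<in> {a..b}"
      by auto
    then have "0 \<le> 4 - 4 * y^2 - x^2 * y^2 - 8 * x^2 * y^4"
      by (simp add: Rset_def)
    moreover have "0 \<le> x^2 * y^2" "0 \<le> x^2 * y^4"
      by simp_all
    ultimately have "y^2 \<le> 1"
      by linarith
    then have "\<bar>y\<bar> \<le> 1"
      by (simp only: abs_square_le_1)
    then show "p \<in> {a..b} \<times> {-1..1}"
      using p by auto
  qed
  then show "bounded (Rset \<inter> {a..b} \<times> UNIV)"
    by (rule bounded_subset[OF bounded_Times[OF bounded_closed_interval bounded_closed_interval]])
  have "Rset \<inter> {a..b} \<times> UNIV
      = {p. a \<le> fst p \<and> fst p \<le> b \<and> 0 \<le> 4 - 4 * (snd p)^2 - (fst p)^2 * (snd p)^2 - 8 * (fst p)^2 * (snd p)^4}"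
    using assms by (auto simp: Rset_def)
  then show "closed (Rset \<inter> {a..b} \<times> UNIV)"
    by (simp only:) (intro closed_Collect_conj closed_Collect_le continuous_intros)
qed

lemma homeomorphism_W_plus: "\<exists>g. homeomorphism Rplus (W_plus ` Rplus) W_plus g"
proof (rule homeomorphism_locally_proper[OF continuous_on_W_plus inj_on_W_plus])
  fix q
  assume "q \<in> W_plus ` Rplus"
  then obtain x0 y0 where p0: "(x0, y0) \<in> Rplus" and q: "q = W_plus (x0, y0)"
    by auto
  define u0 where "u0 = fst q"
  have "0 < u0"
    using Rplus_bounds(1)[OF p0] tau_pos[of x0 y0] by (simp add: u0_def q W_plus_eq)
  have "Rplus \<inter> W_plus -` {q. u0 / 2 < fst q} \<subseteq> Rset \<inter> {u0 / 8..2} \<times> UNIV"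
  proof
    fix p
    assume "p \<in> Rplus \<inter> W_plus -` {q. u0 / 2 < fst q}"
    then obtain x y where p: "p = (x, y)" "(x, y) \<in> Rplus" and "u0 / 2 < x / tau x y"
      by (cases p) (auto simp: W_plus_eq)
    moreover have "x / tau x y \<le> 4 * x"
      using tau_ge_quarter[OF p(2)] Rplus_bounds(1)[OF p(2)] by (simp add: field_simps)
    ultimately have "u0 / 8 \<le> x"
      by linarith
    then show "p \<in> Rset \<inter> {u0 / 8..2} \<times> UNIV"
      using p by (auto simp: Rplus_def)
  qed
  moreover have "Rset \<inter> {u0 / 8..2} \<times> UNIV \<subseteq> Rplus"
    using \<open>0 < u0\<close> by (auto simp: Rplus_def)
  moreover have "open {q. u0 / 2 < fst q}"
    by (intro open_Collect_less continuous_intros)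
  moreover have "q \<in> {q. u0 / 2 < fst q}"
    using \<open>0 < u0\<close> by (simp add: u0_def)
  ultimately show "\<exists>U K. open U \<and> q \<in> U \<and> compact K \<and> K \<subseteq> Rplus \<and> Rplus \<inter> W_plus -` U \<subseteq> K"
    using compact_Rset_strip[of "u0 / 8" 2] \<open>0 < u0\<close> by (metis divide_pos_pos zero_less_numeral)
qed

lemma W_plus_has_derivative:
  assumes "((\<lambda>p. tau (fst p) (snd p)) has_derivative Dt) (at p)"
  shows "(W_plus has_derivative (\<lambda>h. (fst h / tau (fst p) (snd p) - fst p * Dt h / (tau (fst p) (snd p))^2,
            ((1 - tau (fst p) (snd p)) * snd h - snd p * Dt h) / 2))) (at p)"
proof -
  have W: "W_plus = (\<lambda>q. (fst q / tau (fst q) (snd q), (1 - tau (fst q) (snd q)) / 2 * snd q))"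
    by (simp add: W_plus_eq[abs_def])
  have "tau (fst p) (snd p) \<noteq> 0"
    using tau_pos[of "fst p" "snd p"] by simp
  then show ?thesis
    unfolding W by (auto intro!: derivative_eq_intros assms simp: field_simps power2_eq_square)
qed

lemma jac_det_W_plus_derivative:
  assumes Dt: "((\<lambda>p. tau (fst p) (snd p)) has_derivative Dt) (at (x, y))"
  defines "t \<equiv> tau x y"
  shows "2 * t^2 * (4 + x^2 + 8 * x^2 * y^2 - 2 * x^2 * t)
      * jac_det (\<lambda>h. (fst h / t - x * Dt h / t^2, ((1 - t) * snd h - y * Dt h) / 2))
    = 3 * (1 - t) * (4 - x^2 * t^2)"
proof -
  define a b N where "a = Dt (1, 0)" and "b = Dt (0, 1)" and "N = 4 + x^2 + 8 * x^2 * y^2 - 2 * x^2 * t"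
  have "0 < t"
    using tau_pos by (simp add: t_def)
  have Na: "N * a = 2 * x * t^2 - 2 * x * t - 16 * x * y^2 * t"
    using tau_implicit_derivative[OF Dt, of "(1, 0)"] by (simp add: N_def a_def t_def)
  have Nb: "N * b = - 16 * x^2 * y * t"
    using tau_implicit_derivative[OF Dt, of "(0, 1)"] by (simp add: N_def b_def t_def)
  define J where "J = jac_det (\<lambda>h. (fst h / t - x * Dt h / t^2, ((1 - t) * snd h - y * Dt h) / 2))"
  have "2 * t^2 * J = t * (1 - t) - t * y * b - (1 - t) * x * a"
    using \<open>0 < t\<close> by (simp add: J_def jac_det_def a_def b_def field_simps power2_eq_square)
  then have "N * (2 * t^2 * J) = N * (t * (1 - t) - t * y * b - (1 - t) * x * a)"
    by simp
  then have "2 * t^2 * N * J = N * t * (1 - t) - t * y * (N * b) - (1 - t) * x * (N * a)"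
    by (simp add: algebra_simps)
  also have "\<dots> = 3 * (1 - t) * (4 - x^2 * t^2)
      + (t - 3) * (x^2 * t^2 - (4 + x^2 + 8 * x^2 * y^2) * t + 4)"
    unfolding Na Nb by (simp add: N_def) algebra
  also have "\<dots> = 3 * (1 - t) * (4 - x^2 * t^2)"
    using tau_root[of x y] by (simp add: t_def)
  finally show ?thesis
    by (simp add: N_def J_def)
qed

lemma W_plus_jac_det_nonneg:
  assumes "0 < x" "x < 2"
  obtains D where "(W_plus has_derivative D) (at (x, y))" "0 \<le> jac_det D" "y \<noteq> 0 \<Longrightarrow> 0 < jac_det D"
proof -
  have "0 < Delta x y"
    using assms unfolding Delta_def by (intro mult_pos_pos add_pos_nonneg) auto
  then obtain Dt where Dt: "((\<lambda>p. tau (fst p) (snd p)) has_derivative Dt) (at (x, y))"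
    using tau_has_derivative by blast
  define t N where "t = tau x y" and "N = 4 + x^2 + 8 * x^2 * y^2 - 2 * x^2 * t"
  define D where "D = (\<lambda>h. (fst h / t - x * Dt h / t^2, ((1 - t) * snd h - y * Dt h) / 2))"
  have D: "(W_plus has_derivative D) (at (x, y))"
    using W_plus_has_derivative[OF Dt] by (simp add: D_def t_def)
  have J: "2 * t^2 * N * jac_det D = 3 * (1 - t) * (4 - x^2 * t^2)"
    using jac_det_W_plus_derivative[OF Dt] by (simp add: D_def N_def t_def)
  have t: "0 < t" "t \<le> 1"
    using tau_pos tau_le_1 by (simp_all add: t_def)
  have "x^2 < 4"
    using assms power_strict_mono[of x 2 2] by simp
  moreover have "x^2 * t \<le> x^2"
    using t by (simp add: mult_left_le)
  moreover have "0 \<le> 8 * x^2 * y^2"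
    by simp
  ultimately have "0 < N"
    unfolding N_def by linarith
  then have N: "0 < 2 * t^2 * N"
    using t by simp
  have "x * t < 2"
    using assms t by (smt (verit) mult_left_le)
  then have "(x * t)^2 < 2^2"
    using assms t by (intro power_strict_mono) auto
  then have pos: "0 < 4 - x^2 * t^2"
    by (simp add: power_mult_distrib)
  have "0 \<le> jac_det D"
    using J N pos t by (smt (verit) zero_le_mult_iff)
  moreover have "0 < jac_det D" if "y \<noteq> 0"
  proof -
    have "t \<noteq> 1"
      using tau_root[of x y] that assms by (auto simp: t_def)
    then show ?thesis
      using J N pos t by (smt (verit) zero_less_mult_iff)
  qed
  ultimately show ?thesis
    using that D by blast
qed

lemma orientation_preserving_W_plus: "orientation_preserving_on Rplus W_plus"
proof -
  have "interior Rplus \<subseteq> interior ({0<..2} \<times> UNIV)"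
    by (rule interior_mono) (auto simp: Rplus_def)
  then have int: "interior Rplus \<subseteq> {0<..<2} \<times> UNIV"
    by (simp add: interior_Times)
  have "(1, 1 / 2) \<in> interior Rplus"
  proof (rule interiorI)
    let ?T = "{p :: real \<times> real. 0 < fst p \<and> fst p < 2
        \<and> 0 < 4 - 4 * (snd p)^2 - (fst p)^2 * (snd p)^2 - 8 * (fst p)^2 * (snd p)^4}"
    show "open ?T"
      by (intro open_Collect_conj open_Collect_less continuous_intros)
    show "(1, 1 / 2) \<in> ?T"
      by (simp add: power2_eq_square power4_eq_xxxx)
    show "?T \<subseteq> Rplus"
      by (auto simp: Rplus_def Rset_def)
  qed
  moreover obtain D where "(W_plus has_derivative D) (at (1, 1 / 2))" "0 < jac_det D"
    using W_plus_jac_det_nonneg[of 1 "1 / 2"] by auto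
  moreover have "\<exists>D. (W_plus has_derivative D) (at p) \<and> 0 \<le> jac_det D" if "p \<in> interior Rplus" for p
  proof -
    obtain x y where p: "p = (x, y)"
      by fastforce
    then have "0 < x" "x < 2"
      using int that by auto
    then obtain D where "(W_plus has_derivative D) (at (x, y))" "0 \<le> jac_det D"
      using W_plus_jac_det_nonneg by blast
    then show ?thesis
      using p by blast
  qed
  ultimately show ?thesis
    unfolding orientation_preserving_on_def by blast
qed

section \<open>The involution R_flip and the map W_minus\<close>

definition R_flip :: "real \<times> real \<Rightarrow> real \<times> real" where
  "R_flip p = (4 / fst p, fst p * snd p / 2)"

lemma R_flip_R_flip: "0 < fst p \<Longrightarrow> R_flip (R_flip p) = p"
  by (simp add: R_flip_def)

lemma R_flip_in_Rset:
  assumes "p \<in> Rset"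
  shows "R_flip p \<in> Rset"
proof -
  obtain x y where p: "p = (x, y)" "0 < x" "0 \<le> 4 - 4 * y^2 - x^2 * y^2 - 8 * x^2 * y^4"
    using assms by (auto simp: Rset_def)
  have a: "(x * y / 2)^2 = x^2 * y^2 / 4" and b: "(x * y / 2)^4 = x^4 * y^4 / 16"
    by (simp_all add: power_mult_distrib power_divide)
  have c: "(4 / x)^2 * (x^2 * y^2 / 4) = 4 * y^2"
    and d: "8 * (4 / x)^2 * (x^4 * y^4 / 16) = 8 * x^2 * y^4"
    using p(2) by (simp_all add: power_divide field_simps power2_eq_square power4_eq_xxxx)
  have "4 - 4 * (x * y / 2)^2 - (4 / x)^2 * (x * y / 2)^2 - 8 * (4 / x)^2 * (x * y / 2)^4
      = 4 - 4 * y^2 - x^2 * y^2 - 8 * x^2 * y^4"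
    unfolding a b c d by linarith
  then show ?thesis
    using p by (simp add: R_flip_def Rset_def)
qed

lemma image_R_flip_Rplus: "R_flip ` Rplus = Rminus"
proof
  show "R_flip ` Rplus \<subseteq> Rminus"
  proof
    fix q
    assume "q \<in> R_flip ` Rplus"
    then obtain p where p: "p \<in> Rplus" "q = R_flip p"
      by blast
    then have "2 \<le> 4 / fst p"
      by (auto simp: Rplus_def Rset_def field_simps)
    then show "q \<in> Rminus"
      using p R_flip_in_Rset[of p] by (auto simp: Rplus_def Rminus_def R_flip_def)
  qed
  show "Rminus \<subseteq> R_flip ` Rplus"
  proof
    fix q
    assume q: "q \<in> Rminus"
    then have "0 < fst q" "2 \<le> fst q"
      by (auto simp: Rminus_def Rset_def)
    then have "R_flip q \<in> Rplus"
      using q R_flip_in_Rset[of q] by (auto simp: Rplus_def Rminus_def R_flip_def field_simps)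
    moreover have "q = R_flip (R_flip q)"
      using \<open>0 < fst q\<close> by (simp add: R_flip_R_flip)
    ultimately show "q \<in> R_flip ` Rplus"
      by blast
  qed
qed

lemma W_minus_eq:
  assumes "0 < fst p"
  shows "W_minus p = R_flip (W_plus (R_flip p))"
proof -
  obtain x y where p: "p = (x, y)"
    by fastforce
  define w t where "w = omega_plus (4 / x) (x * y / 2)" and "t = tau (4 / x) (x * y / 2)"
  have w: "0 \<le> w" "w < 1"
    using omega_plus_nonneg omega_plus_less_1 by (simp_all add: w_def)
  have t_eq: "t = (1 - w) / (1 + w)"
    by (simp add: t_def w_def tau_def)
  have "0 < t"
    using tau_pos by (simp add: t_def)
  have "t * (1 + w) = 1 - w"
    using w unfolding t_eq by simp
  then have "w / (1 - w) = (1 - t) / (2 * t)"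
    using w \<open>0 < t\<close> by (simp add: frac_eq_eq algebra_simps)
  note t = \<open>0 < t\<close> this
  have "W_minus p = ((1 - w) / (1 + w) * x, w / (1 - w) * y)"
    using assms w by (simp add: p W_minus_def Wmap_def Let_def omega_minus_eq w_def)
  also have "\<dots> = (t * x, (1 - t) / (2 * t) * y)"
    by (simp add: t_eq t(2))
  also have "\<dots> = R_flip (W_plus (R_flip p))"
    using assms t(1) by (simp add: p R_flip_def W_plus_eq flip: t_def)
  finally show ?thesis .
qed

lemma W_minus_R_flip: "0 < fst p \<Longrightarrow> W_minus (R_flip p) = R_flip (W_plus p)"
  using W_minus_eq[of "R_flip p"] R_flip_R_flip[of p] by (simp add: R_flip_def)

lemma W_minus_image: "W_minus ` Rminus = R_flip ` W_plus ` Rplus"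
proof -
  have "W_minus ` Rminus = (\<lambda>p. W_minus (R_flip p)) ` Rplus"
    by (simp add: image_R_flip_Rplus[symmetric] image_image)
  also have "\<dots> = (\<lambda>p. R_flip (W_plus p)) ` Rplus"
    by (rule image_cong) (auto simp: W_minus_R_flip Rplus_def Rset_def)
  finally show ?thesis
    by (simp add: image_image)
qed

lemma W_minus_image_subset: "W_minus ` Rminus \<subseteq> Rset"
  unfolding W_minus_image using W_plus_image_subset R_flip_in_Rset by blast

lemma homeomorphism_W_minus: "\<exists>g. homeomorphism Rminus (W_minus ` Rminus) W_minus g"
proof -
  let ?H = "{p :: real \<times> real. 0 < fst p}"
  have "continuous_on ?H R_flip"
    unfolding R_flip_def by (intro continuous_intros) auto
  moreover have "R_flip p \<in> ?H" "R_flip (R_flip p) = p" if "p \<in> ?H" for p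
    using that by (simp_all add: R_flip_def)
  ultimately have flip: "homeomorphism A (R_flip ` A) R_flip R_flip" if "A \<subseteq> ?H" for A
    using that homeomorphism_involution[of ?H R_flip A] by blast
  have "Rset \<subseteq> ?H"
    by (auto simp: Rset_def)
  then have "Rplus \<subseteq> ?H" "W_plus ` Rplus \<subseteq> ?H"
    using W_plus_image_subset by (auto simp: Rplus_def)
  then have "homeomorphism Rminus Rplus R_flip R_flip"
    and "homeomorphism (W_plus ` Rplus) (R_flip ` W_plus ` Rplus) R_flip R_flip"
    using flip[of Rplus] flip[of "W_plus ` Rplus"] homeomorphism_symD
    by (simp_all add: image_R_flip_Rplus)
  moreover obtain g where "homeomorphism Rplus (W_plus ` Rplus) W_plus g"
    using homeomorphism_W_plus by blast
  ultimately have "homeomorphism Rminus (R_flip ` W_plus ` Rplus)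
      (R_flip \<circ> (W_plus \<circ> R_flip)) ((R_flip \<circ> g) \<circ> R_flip)"
    by (meson homeomorphism_compose)
  then have "homeomorphism Rminus (W_minus ` Rminus) W_minus ((R_flip \<circ> g) \<circ> R_flip)"
    by (rule homeomorphism_cong[OF _ refl W_minus_image]) (auto simp: W_minus_eq Rminus_def Rset_def)
  then show ?thesis
    by blast
qed

definition R_flip_deriv :: "real \<times> real \<Rightarrow> real \<times> real \<Rightarrow> real \<times> real" where
  "R_flip_deriv q h = (- 4 * fst h / (fst q)^2, (snd q * fst h + fst q * snd h) / 2)"

lemma has_derivative_R_flip: "fst q \<noteq> 0 \<Longrightarrow> (R_flip has_derivative R_flip_deriv q) (at q)"
  unfolding R_flip_def[abs_def] R_flip_deriv_def[abs_def]
  by (auto intro!: derivative_eq_intros simp: field_simps power2_eq_square)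

lemma jac_det_R_flip_deriv: "fst q \<noteq> 0 \<Longrightarrow> jac_det (R_flip_deriv q) = - 2 / fst q"
  by (simp add: jac_det_def R_flip_deriv_def field_simps power2_eq_square)

lemma W_minus_has_derivative:
  assumes "0 < fst p" and D: "(W_plus has_derivative D) (at (R_flip p))"
  shows "(W_minus has_derivative R_flip_deriv (W_plus (R_flip p)) \<circ> (D \<circ> R_flip_deriv p)) (at p)"
proof -
  have "0 < fst (W_plus (R_flip p))"
    using assms(1) tau_pos by (simp add: W_plus_eq R_flip_def)
  have "(R_flip has_derivative R_flip_deriv p) (at p)"
    using assms(1) by (simp add: has_derivative_R_flip)
  then have inner: "((\<lambda>z. W_plus (R_flip z)) has_derivative (\<lambda>h. D (R_flip_deriv p h))) (at p)"
    using has_derivative_compose D by blast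
  have "(R_flip has_derivative R_flip_deriv (W_plus (R_flip p))) (at (W_plus (R_flip p)))"
    using \<open>0 < fst (W_plus (R_flip p))\<close> by (simp add: has_derivative_R_flip)
  then have "((\<lambda>z. R_flip (W_plus (R_flip z))) has_derivative
      R_flip_deriv (W_plus (R_flip p)) \<circ> (D \<circ> R_flip_deriv p)) (at p)"
    using has_derivative_compose[OF inner] unfolding comp_def by blast
  moreover have "open {z :: real \<times> real. 0 < fst z}"
    by (intro open_Collect_less continuous_intros)
  ultimately show ?thesis
    by (rule has_derivative_transform_within_open) (use assms(1) in \<open>auto simp: W_minus_eq\<close>)
qed

lemma W_minus_jac_det_nonneg:
  assumes "2 < x"
  obtains D where "(W_minus has_derivative D) (at (x, y))" "0 \<le> jac_det D" "y \<noteq> 0 \<Longrightarrow> 0 < jac_det D"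
proof -
  define p q where "p = R_flip (x, y)" and "q = W_plus p"
  have p: "p = (4 / x, x * y / 2)" "0 < 4 / x" "4 / x < 2"
    using assms by (simp_all add: p_def R_flip_def field_simps)
  obtain Dp where Dp: "(W_plus has_derivative Dp) (at p)" "0 \<le> jac_det Dp" "y \<noteq> 0 \<Longrightarrow> 0 < jac_det Dp"
    using W_plus_jac_det_nonneg[OF p(2,3), of "x * y / 2"] assms unfolding p(1) by auto
  have "0 < fst q"
    using p tau_pos by (simp add: q_def W_plus_eq)
  let ?D = "R_flip_deriv q \<circ> (Dp \<circ> R_flip_deriv (x, y))"
  have D: "(W_minus has_derivative ?D) (at (x, y))"
    using W_minus_has_derivative[of "(x, y)" Dp] Dp(1) assms by (simp add: p_def q_def)
  have "linear (R_flip_deriv q)" "linear (R_flip_deriv (x, y))" "linear Dp"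
    using has_derivative_R_flip[of q] has_derivative_R_flip[of "(x, y)"] Dp(1) \<open>0 < fst q\<close> assms
    by (auto intro: has_derivative_linear)
  then have "jac_det ?D = jac_det (R_flip_deriv q) * (jac_det Dp * jac_det (R_flip_deriv (x, y)))"
    by (simp add: jac_det_compose linear_compose)
  also have "\<dots> = 4 * jac_det Dp / (fst q * x)"
    using \<open>0 < fst q\<close> assms by (simp add: jac_det_R_flip_deriv)
  finally show ?thesis
    using that[OF D] Dp(2,3) \<open>0 < fst q\<close> assms by simp
qed

lemma orientation_preserving_W_minus: "orientation_preserving_on Rminus W_minus"
proof -
  have "interior Rminus \<subseteq> interior ({2..} \<times> UNIV)"
    by (rule interior_mono) (auto simp: Rminus_def)
  then have int: "interior Rminus \<subseteq> {2<..} \<times> UNIV"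
    by (simp add: interior_Times)
  have "(4, 1 / 4) \<in> interior Rminus"
  proof (rule interiorI)
    let ?T = "{p :: real \<times> real. 2 < fst p
        \<and> 0 < 4 - 4 * (snd p)^2 - (fst p)^2 * (snd p)^2 - 8 * (fst p)^2 * (snd p)^4}"
    show "open ?T"
      by (intro open_Collect_conj open_Collect_less continuous_intros)
    show "(4, 1 / 4) \<in> ?T"
      by (simp add: power2_eq_square power4_eq_xxxx)
    show "?T \<subseteq> Rminus"
      by (auto simp: Rminus_def Rset_def)
  qed
  moreover obtain D where "(W_minus has_derivative D) (at (4, 1 / 4))" "0 < jac_det D"
    using W_minus_jac_det_nonneg[of 4 "1 / 4"] by auto
  moreover have "\<exists>D. (W_minus has_derivative D) (at p) \<and> 0 \<le> jac_det D" if "p \<in> interior Rminus" for p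
  proof -
    obtain x y where p: "p = (x, y)"
      by fastforce
    then have "2 < x"
      using int that by auto
    then obtain D where "(W_minus has_derivative D) (at (x, y))" "0 \<le> jac_det D"
      using W_minus_jac_det_nonneg by blast
    then show ?thesis
      using p by blast
  qed
  ultimately show ?thesis
    unfolding orientation_preserving_on_def by blast
qed

theorem proposition4p3:
  shows "(\<exists>g. homeomorphism Rplus (W_plus ` Rplus) W_plus g)
       \<and> orientation_preserving_on Rplus W_plus
       \<and> W_plus ` Rplus \<subseteq> Rset
       \<and> (\<exists>g. homeomorphism Rminus (W_minus ` Rminus) W_minus g)
       \<and> orientation_preserving_on Rminus W_minus
       \<and> W_minus ` Rminus \<subseteq> Rset"
  using homeomorphism_W_plus orientation_preserving_W_plus W_plus_image_subset
    homeomorphism_W_minus orientation_preserving_W_minus W_minus_image_subset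
  by blast

end
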